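(* Let $C\subseteq\{0,1\}^n$ with $|C|\leq 2^{\frac{1}{64}n}$, let $\epsilon<1/8$, and let $J\subseteq[n]$ with $|J|\leq n/2$. Then a random $X\sim U_J(C)$ is $\epsilon$-far from $C$ with probability $1-o(1)$ (as $n\to\infty$). Furthermore, this remains true when conditioned on any value of $X[J]$.
   Context: $[n]=\{1,\dots,n\}$. For $x\in\{0,1\}^n$ and $J\subseteq[n]$, $x[J]=(x_j)_{j\in J}$. $U(C)$ denotes the uniform distribution on $C$, and $U_J(C)$ denotes the distribution obtained by drawing $x\sim U(C)$ and then replacing $x[[n]\setminus J]$ by a uniformly random vector in $\{0,1\}^{n-|J|}$, independent of everything else. Distance is normalized Hamming distance $d(x,y)=|\{i:x_i\neq y_i\}|/n$, $d(x,C)=\min_{c\in C}d(x,c)$, and $x$ is $\epsilon$-far from $C$ if $d(x,C)>\epsilon$. *)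

theory Defs
  imports "HOL-Probability.Probability"
begin

text \<open>Vectors in {0,1}^n are boolean lists of length n; coordinates are indexed
  by {0..<n} (0-based) instead of [n] = {1..n}.\<close>

definition cube :: "nat \<Rightarrow> bool list set" where
  "cube n = {xs. length xs = n}"

definition hdist :: "bool list \<Rightarrow> bool list \<Rightarrow> real" where
  "hdist x y = real (card {i. i < length x \<and> x ! i \<noteq> y ! i}) / real (length x)"

definition dist_code :: "bool list \<Rightarrow> bool list set \<Rightarrow> real" where
  "dist_code x C = Min ((hdist x) ` C)"

definition eps_far :: "real \<Rightarrow> bool list \<Rightarrow> bool list set \<Rightarrow> bool" where
  "eps_far eps x C \<longleftrightarrow> dist_code x C > eps"

definition restr :: "bool list \<Rightarrow> nat set \<Rightarrow> bool list" where
  "restr x J = map (\<lambda>j. x ! j) (sorted_list_of_set J)"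

definition U_J :: "nat \<Rightarrow> bool list set \<Rightarrow> nat set \<Rightarrow> bool list pmf" where
  "U_J n C J =
     pmf_of_set C \<bind> (\<lambda>c. pmf_of_set (cube n) \<bind> (\<lambda>r.
       return_pmf (map (\<lambda>i. if i \<in> J then c ! i else r ! i) [0..<n])))"

end

theory Submission
  imports Defs
begin

text \<open>Condition on the codeword \<open>c\<^sub>0\<close> drawn from \<open>C\<close>. The at least \<open>n/2\<close> coordinates
  outside \<open>J\<close> are then uniformly random, so for a fixed \<open>c \<in> C\<close> the sample is within distance
  \<open>\<epsilon> < 1/8\<close> of \<open>c\<close> only if it disagrees with \<open>c\<close> on at most \<open>n/8\<close> of these coordinates.
  Weighting each disagreement by \<open>1/3\<close> (an exponential moment bound) shows that this happens
  with probability at most \<open>3 powr (n/8) * (2/3) powr (n/2)\<close>, and a union bound over the at most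
  \<open>2 powr (n/64)\<close> codewords leaves a probability that decays exponentially, because
  \<open>2 powr (1/64) * 3 powr (1/8) * (2/3) powr (1/2) < 1\<close>. Once \<open>c\<^sub>0\<close> is fixed, \<open>X[J] = c\<^sub>0[J]\<close>
  is determined, so the bound survives conditioning on \<open>X[J]\<close>.\<close>

lemma measure_bind_pmf_of_set:
  assumes "finite A" "A \<noteq> {}"
  shows "measure_pmf.prob (pmf_of_set A \<bind> N) X = (\<Sum>a\<in>A. measure_pmf.prob (N a) X) / card A"
proof -
  have "measure_pmf.prob (pmf_of_set A \<bind> N) X
      = (\<integral>a. measure_pmf.prob (N a) X \<partial>measure_pmf (pmf_of_set A))"
    unfolding measure_pmf_bind
    by (rule measure_pmf.measure_bind[where N="count_space UNIV"])
       (auto intro: measurable_measure_pmf simp: space_subprob_algebra subprob_space_measure_pmf)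
  also have "\<dots> = (\<Sum>a\<in>A. measure_pmf.prob (N a) X) / card A"
    using assms by (simp add: integral_pmf_of_set)
  finally show ?thesis .
qed

lemma sum_Pow_power_card_Int:
  fixes q :: "'a :: comm_semiring_1"
  assumes "finite A" "K \<subseteq> A"
  shows "(\<Sum>D\<in>Pow A. q ^ card (D \<inter> K)) = (1 + q) ^ card K * 2 ^ card (A - K)"
proof -
  define w where "w i = (if i \<in> K then q else 1)" for i
  have "(\<Sum>D\<in>Pow A. q ^ card (D \<inter> K)) = (\<Sum>D\<in>Pow A. (\<Prod>i\<in>D. w i) * (\<Prod>i\<in>A - D. 1))"
  proof (rule sum.cong)
    fix D assume "D \<in> Pow A"
    then have "finite D" using assms(1) by (auto intro: finite_subset)
    then have "(\<Prod>i\<in>D. w i) = (\<Prod>i\<in>D \<inter> {i. i \<in> K}. q) * (\<Prod>i\<in>D \<inter> - {i. i \<in> K}. 1)"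
      unfolding w_def by (rule prod.If_cases)
    then show "q ^ card (D \<inter> K) = (\<Prod>i\<in>D. w i) * (\<Prod>i\<in>A - D. 1)" by simp
  qed simp
  also have "\<dots> = (\<Prod>i\<in>A. w i + 1)"
    by (rule prod_add[symmetric]) (rule assms(1))
  also have "\<dots> = (\<Prod>i\<in>A. if i \<in> K then 1 + q else 2)"
    unfolding w_def by (intro prod.cong) (simp_all add: add.commute one_add_one)
  also have "\<dots> = (\<Prod>i\<in>A \<inter> {i. i \<in> K}. 1 + q) * (\<Prod>i\<in>A \<inter> - {i. i \<in> K}. 2)"
    by (rule prod.If_cases) (rule assms(1))
  also have "A \<inter> {i. i \<in> K} = K" using assms(2) by auto
  also have "A \<inter> - {i. i \<in> K} = A - K" by auto
  finally show ?thesis by simp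
qed

lemma finite_cube: "finite (cube n)"
  and card_cube: "card (cube n) = 2 ^ n"
proof -
  have "cube n = {xs. set xs \<subseteq> (UNIV :: bool set) \<and> length xs = n}" by (auto simp: cube_def)
  then show "finite (cube n)" "card (cube n) = 2 ^ n"
    using finite_lists_length_eq[of "UNIV :: bool set" n] card_lists_length_eq[of "UNIV :: bool set" n]
    by simp_all
qed

lemma bij_betw_cube_mismatches:
  "bij_betw (\<lambda>r. {i. i < n \<and> r ! i \<noteq> c ! i}) (cube n) (Pow {0..<n})"
proof (rule bij_betw_imageI)
  show "inj_on (\<lambda>r. {i. i < n \<and> r ! i \<noteq> c ! i}) (cube n)"
  proof (rule inj_onI)
    fix r s assume "r \<in> cube n" "s \<in> cube n"
      and eq: "{i. i < n \<and> r ! i \<noteq> c ! i} = {i. i < n \<and> s ! i \<noteq> c ! i}"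
    show "r = s"
    proof (rule nth_equalityI)
      show "length r = length s" using \<open>r \<in> cube n\<close> \<open>s \<in> cube n\<close> by (simp add: cube_def)
      fix i assume "i < length r"
      then have "i < n" using \<open>r \<in> cube n\<close> by (simp add: cube_def)
      then have "(r ! i \<noteq> c ! i) = (s ! i \<noteq> c ! i)" using eq by blast
      then show "r ! i = s ! i" by auto
    qed
  qed
  have "D \<in> (\<lambda>r. {i. i < n \<and> r ! i \<noteq> c ! i}) ` cube n" if "D \<subseteq> {0..<n}" for D
  proof
    show "map (\<lambda>i. c ! i \<noteq> (i \<in> D)) [0..<n] \<in> cube n" by (simp add: cube_def)
    show "D = {i. i < n \<and> map (\<lambda>i. c ! i \<noteq> (i \<in> D)) [0..<n] ! i \<noteq> c ! i}"
      using that by auto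
  qed
  then show "(\<lambda>r. {i. i < n \<and> r ! i \<noteq> c ! i}) ` cube n = Pow {0..<n}" by auto
qed

lemma card_cube_few_mismatches:
  fixes a t :: real
  assumes "a \<ge> 1" "K \<subseteq> {0..<n}"
  shows "real (card {r \<in> cube n. real (card {i \<in> K. r ! i \<noteq> c ! i}) \<le> t})
    \<le> a powr t * (1 + 1/a) ^ card K * 2 ^ (n - card K)"
proof -
  define m where "m r = card {i \<in> K. r ! i \<noteq> c ! i}" for r :: "bool list"
  have m_eq: "m r = card ({i. i < n \<and> r ! i \<noteq> c ! i} \<inter> K)" for r
    unfolding m_def using assms(2) by (intro arg_cong[where f=card]) auto
  have "real (card {r \<in> cube n. real (m r) \<le> t}) = (\<Sum>r | r \<in> cube n \<and> real (m r) \<le> t. 1)"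
    by simp
  also have "\<dots> \<le> (\<Sum>r | r \<in> cube n \<and> real (m r) \<le> t. a powr t * (1/a) ^ m r)"
  proof (rule sum_mono)
    fix r assume "r \<in> {r. r \<in> cube n \<and> real (m r) \<le> t}"
    then have "a ^ m r \<le> a powr t"
      using assms(1) by (auto simp: powr_realpow[symmetric] intro: powr_mono)
    then show "1 \<le> a powr t * (1/a) ^ m r"
      using assms(1) by (simp add: power_one_over field_simps)
  qed
  also have "\<dots> \<le> (\<Sum>r\<in>cube n. a powr t * (1/a) ^ m r)"
    using assms(1) by (intro sum_mono2[OF finite_cube]) auto
  also have "\<dots> = a powr t * (\<Sum>D\<in>Pow {0..<n}. (1/a) ^ card (D \<inter> K))"
    unfolding sum_distrib_left[symmetric] m_eq
    by (rule arg_cong[OF sum.reindex_bij_betw[OF bij_betw_cube_mismatches]])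
  also have "\<dots> = a powr t * (1 + 1/a) ^ card K * 2 ^ (n - card K)"
    using assms(2) by (simp add: sum_Pow_power_card_Int card_Diff_subset finite_subset)
  finally show ?thesis unfolding m_def .
qed

definition resample :: "nat \<Rightarrow> nat set \<Rightarrow> bool list \<Rightarrow> bool list \<Rightarrow> bool list" where
  "resample n J c r = map (\<lambda>i. if i \<in> J then c ! i else r ! i) [0..<n]"

lemma U_J_eq_bind_resample:
  "U_J n C J = pmf_of_set C \<bind> (\<lambda>c. map_pmf (resample n J c) (pmf_of_set (cube n)))"
  by (simp add: U_J_def map_pmf_def resample_def)

lemma restr_resample:
  assumes "J \<subseteq> {0..<n}"
  shows "restr (resample n J c r) J = restr c J"
  using assms finite_subset[OF assms] unfolding restr_def resample_def by (intro map_cong) auto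

lemma prob_resample_close:
  assumes "eps < 1/8" "J \<subseteq> {0..<n}"
  shows "measure_pmf.prob (map_pmf (resample n J c\<^sub>0) (pmf_of_set (cube n))) {x. hdist x c \<le> eps}
    \<le> 3 powr (real n / 8) * (2/3) ^ (n - card J)"
proof -
  define K where "K = {0..<n} - J"
  have card_J: "card J \<le> n" using card_mono[OF _ assms(2)] by simp
  have card_K: "card K = n - card J" unfolding K_def using assms(2) by (simp add: card_Diff_subset finite_subset)
  have cube_ne: "cube n \<noteq> {}" by (auto simp: cube_def intro: exI[of _ "replicate n False"])
  let ?close = "cube n \<inter> resample n J c\<^sub>0 -` {x. hdist x c \<le> eps}"
  have "?close \<subseteq> {r \<in> cube n. real (card {i \<in> K. r ! i \<noteq> c ! i}) \<le> real n / 8}"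
  proof (safe)
    fix r assume r: "r \<in> cube n" and close: "hdist (resample n J c\<^sub>0 r) c \<le> eps"
    let ?x = "resample n J c\<^sub>0 r"
    have "{i \<in> K. r ! i \<noteq> c ! i} \<subseteq> {i. i < length ?x \<and> ?x ! i \<noteq> c ! i}"
      unfolding K_def resample_def by auto
    then have mono: "card {i \<in> K. r ! i \<noteq> c ! i} \<le> card {i. i < length ?x \<and> ?x ! i \<noteq> c ! i}"
      by (intro card_mono) auto
    show "real (card {i \<in> K. r ! i \<noteq> c ! i}) \<le> real n / 8"
    proof (cases "n = 0")
      case False
      then have "real (card {i. i < length ?x \<and> ?x ! i \<noteq> c ! i}) \<le> eps * real n"
        using close by (simp add: hdist_def resample_def divide_le_eq)
      also have "\<dots> \<le> real n / 8" using assms(1) mult_right_mono[of eps "1/8" "real n"] by simp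
      finally show ?thesis using mono by linarith
    qed (simp add: K_def)
  qed
  then have "real (card ?close) \<le> real (card {r \<in> cube n. real (card {i \<in> K. r ! i \<noteq> c ! i}) \<le> real n / 8})"
    using finite_cube by (intro of_nat_mono card_mono) auto
  also have "\<dots> \<le> 3 powr (real n / 8) * (4/3) ^ (n - card J) * 2 ^ card J"
    using card_cube_few_mismatches[of 3 K n c "real n / 8"] card_J card_K
    by (simp add: K_def)
  also have "\<dots> = 3 powr (real n / 8) * (2/3) ^ (n - card J) * 2 ^ (n - card J + card J)"
    by (simp add: power_add power_mult_distrib[symmetric])
  also have "n - card J + card J = n" using card_J by simp
  finally show ?thesis
    using cube_ne finite_cube by (simp add: measure_pmf_of_set card_cube divide_le_eq)
qed

definition far_decay_exponent :: real where
  "far_decay_exponent = 33/64 * ln 2 - 3/8 * ln 3"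

definition far_decay :: "nat \<Rightarrow> real" where
  "far_decay n = exp far_decay_exponent ^ n"

lemma far_decay_exponent_neg: "far_decay_exponent < 0"
proof -
  have "ln ((2::real) ^ 33) < ln (3 ^ 24)" by (subst ln_less_cancel_iff) auto
  moreover have "ln ((2::real) ^ 33) = 33 * ln 2" "ln ((3::real) ^ 24) = 24 * ln 3"
    by (simp_all only: ln_realpow)
  ultimately show ?thesis unfolding far_decay_exponent_def by linarith
qed

lemma far_decay_LIMSEQ_zero: "far_decay \<longlonglongrightarrow> 0"
  unfolding far_decay_def using far_decay_exponent_neg by (intro LIMSEQ_power_zero) auto

lemma far_decay_eq: "far_decay n = 2 powr (real n / 64) * 3 powr (real n / 8) * (2/3) powr (real n / 2)"
proof -
  have "far_decay n = exp (real n * far_decay_exponent)"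
    unfolding far_decay_def by (simp add: exp_of_nat_mult)
  also have "\<dots> = exp (real n / 64 * ln 2 + real n / 8 * ln 3 + real n / 2 * ln (2/3))"
    unfolding far_decay_exponent_def by (simp add: ln_div algebra_simps)
  finally show ?thesis by (simp add: powr_def exp_add)
qed

lemma not_eps_far_iff:
  assumes "finite C" "C \<noteq> {}"
  shows "\<not> eps_far eps x C \<longleftrightarrow> (\<exists>c\<in>C. hdist x c \<le> eps)"
  using assms by (simp add: eps_far_def dist_code_def Min_le_iff not_less)

lemma prob_resample_not_far:
  assumes "eps < 1/8" "J \<subseteq> {0..<n}" "real (card J) \<le> real n / 2"
    and "C \<subseteq> cube n" "C \<noteq> {}" "real (card C) \<le> 2 powr (real n / 64)"
  shows "measure_pmf.prob (map_pmf (resample n J c\<^sub>0) (pmf_of_set (cube n))) {x. \<not> eps_far eps x C}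
    \<le> far_decay n"
proof -
  let ?M = "map_pmf (resample n J c\<^sub>0) (pmf_of_set (cube n))"
  have "finite C" using assms(4) finite_cube finite_subset by blast
  then have not_far: "{x. \<not> eps_far eps x C} = (\<Union>c\<in>C. {x. hdist x c \<le> eps})"
    using assms(5) not_eps_far_iff by blast
  have "measure_pmf.prob ?M {x. \<not> eps_far eps x C} \<le> (\<Sum>c\<in>C. measure_pmf.prob ?M {x. hdist x c \<le> eps})"
    unfolding not_far using \<open>finite C\<close> by (rule measure_pmf.finite_measure_subadditive_finite) auto
  also have "\<dots> \<le> real (card C) * (3 powr (real n / 8) * (2/3) ^ (n - card J))"
    using sum_mono[OF prob_resample_close[OF assms(1,2)]] by simp
  also have "\<dots> \<le> 2 powr (real n / 64) * (3 powr (real n / 8) * (2/3) powr (real n / 2))"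
  proof (rule mult_mono[OF assms(6)])
    have "(2/3::real) ^ (n - card J) = (2/3) powr real (n - card J)" by (simp add: powr_realpow)
    also have "\<dots> \<le> (2/3) powr (real n / 2)"
      using assms(3) by (intro powr_mono') (auto simp: of_nat_diff)
    finally show "3 powr (real n / 8) * (2/3) ^ (n - card J) \<le> 3 powr (real n / 8) * (2/3) powr (real n / 2)"
      by simp
  qed auto
  finally show ?thesis by (simp add: far_decay_eq mult.assoc)
qed

lemma prob_resample_far:
  assumes "eps < 1/8" "J \<subseteq> {0..<n}" "real (card J) \<le> real n / 2"
    and "C \<subseteq> cube n" "C \<noteq> {}" "real (card C) \<le> 2 powr (real n / 64)"
  shows "1 - far_decay n
    \<le> measure_pmf.prob (map_pmf (resample n J c\<^sub>0) (pmf_of_set (cube n))) {x. eps_far eps x C}"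
  using measure_pmf.prob_compl[of "{x. \<not> eps_far eps x C}" "map_pmf (resample n J c\<^sub>0) (pmf_of_set (cube n))"]
    prob_resample_not_far[OF assms, of c\<^sub>0]
  by (simp add: Compl_eq_Diff_UNIV[symmetric] Collect_neg_eq[symmetric])

lemma prob_resample_restr:
  assumes "J \<subseteq> {0..<n}"
  shows "measure_pmf.prob (map_pmf (resample n J c) (pmf_of_set (cube n))) {x. P x \<and> restr x J = y}
    = (if restr c J = y then measure_pmf.prob (map_pmf (resample n J c) (pmf_of_set (cube n))) {x. P x} else 0)"
  using restr_resample[OF assms] by (simp add: vimage_def)

lemma prob_resample_far_and_restr:
  assumes "eps < 1/8" "J \<subseteq> {0..<n}" "real (card J) \<le> real n / 2"
    and "C \<subseteq> cube n" "C \<noteq> {}" "real (card C) \<le> 2 powr (real n / 64)"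
  shows "(1 - far_decay n) * measure_pmf.prob (map_pmf (resample n J c) (pmf_of_set (cube n))) {x. restr x J = y}
    \<le> measure_pmf.prob (map_pmf (resample n J c) (pmf_of_set (cube n))) {x. eps_far eps x C \<and> restr x J = y}"
proof (cases "restr c J = y")
  case True
  let ?M = "map_pmf (resample n J c) (pmf_of_set (cube n))"
  have "measure_pmf.prob ?M {x. eps_far eps x C \<and> restr x J = y} = measure_pmf.prob ?M {x. eps_far eps x C}"
    and "measure_pmf.prob ?M {x. restr x J = y} = 1"
    using True prob_resample_restr[OF assms(2), where c=c and y=y] restr_resample[OF assms(2)] by simp_all
  then show ?thesis using prob_resample_far[OF assms, of c] by (simp only: mult_1_right)
qed (simp add: prob_resample_restr[OF assms(2), where P="\<lambda>_. True", simplified])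

theorem lemma6:
  fixes eps :: real
  assumes "eps < 1/8"
  shows "\<exists>\<delta> :: nat \<Rightarrow> real. \<delta> \<longlonglongrightarrow> 0 \<and>
    (\<forall>n C J. C \<subseteq> cube n \<longrightarrow> C \<noteq> {} \<longrightarrow>
       real (card C) \<le> 2 powr (real n / 64) \<longrightarrow>
       J \<subseteq> {0..<n} \<longrightarrow> real (card J) \<le> real n / 2 \<longrightarrow>
       measure_pmf.prob (U_J n C J) {x. eps_far eps x C} \<ge> 1 - \<delta> n \<and>
       (\<forall>y. measure_pmf.prob (U_J n C J) {x. restr x J = y} > 0 \<longrightarrow>
          measure_pmf.prob (U_J n C J) {x. eps_far eps x C \<and> restr x J = y}
            / measure_pmf.prob (U_J n C J) {x. restr x J = y} \<ge> 1 - \<delta> n))"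
proof (intro exI[of _ far_decay] conjI allI impI)
  show "far_decay \<longlonglongrightarrow> 0" by (rule far_decay_LIMSEQ_zero)
  fix n C J
  assume C: "C \<subseteq> cube n" "C \<noteq> {}" "real (card C) \<le> 2 powr (real n / 64)"
    and J: "J \<subseteq> {0..<n}" "real (card J) \<le> real n / 2"
  let ?M = "\<lambda>c. map_pmf (resample n J c) (pmf_of_set (cube n))"
  have "finite C" using C(1) finite_cube finite_subset by blast
  have average: "measure_pmf.prob (U_J n C J) X = (\<Sum>c\<in>C. measure_pmf.prob (?M c) X) / card C" for X
    unfolding U_J_eq_bind_resample using \<open>finite C\<close> C(2) by (rule measure_bind_pmf_of_set)
  have "(1 - far_decay n) * measure_pmf.prob (U_J n C J) {x. P x}
      \<le> measure_pmf.prob (U_J n C J) {x. eps_far eps x C \<and> P x}"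
    if "\<And>c. (1 - far_decay n) * measure_pmf.prob (?M c) {x. P x}
            \<le> measure_pmf.prob (?M c) {x. eps_far eps x C \<and> P x}" for P
    unfolding average times_divide_eq_right sum_distrib_left
    by (intro divide_right_mono sum_mono that) simp
  from this[of "\<lambda>_. True"] this[of "\<lambda>x. restr x J = y" for y]
  have far: "1 - far_decay n \<le> measure_pmf.prob (U_J n C J) {x. eps_far eps x C}"
    and far_and_restr: "(1 - far_decay n) * measure_pmf.prob (U_J n C J) {x. restr x J = y}
      \<le> measure_pmf.prob (U_J n C J) {x. eps_far eps x C \<and> restr x J = y}" for y
    using prob_resample_far[OF assms J C] prob_resample_far_and_restr[OF assms J C] by simp_all
  show "1 - far_decay n \<le> measure_pmf.prob (U_J n C J) {x. eps_far eps x C}" by (rule far)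
  show "1 - far_decay n \<le> measure_pmf.prob (U_J n C J) {x. eps_far eps x C \<and> restr x J = y}
      / measure_pmf.prob (U_J n C J) {x. restr x J = y}"
    if "measure_pmf.prob (U_J n C J) {x. restr x J = y} > 0" for y
    using far_and_restr[of y] that by (simp add: le_divide_eq)
qed

end
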